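(* For all $\Gamma\subseteq\{0,1\}^\infty$, $$\dim_P(\Gamma)=\inf \mathscr G_{\mathrm{str}}(\Gamma),$$ where $\mathscr G_{\mathrm{str}}(\Gamma)=\{s\in[0,\infty) : \text{there exists a learning function } l \text{ which strongly } s\text{-learns every } X\in\Gamma\}$.
   Context: $\dim_P$ denotes the (classical) packing dimension on the Cantor space $\{0,1\}^\infty$; equivalently, for $s\in[0,\infty)$ an $s$-gale is a function $d:\{0,1\}^*\to[0,\infty)$ with $d(w)2^{-s|w|}=d(w0)2^{-s(|w|+1)}+d(w1)2^{-s(|w|+1)}$ for all $w$, $d$ succeeds strongly on $X$ if $\liminf_n d(X\upharpoonright n)=\infty$, and $\dim_P(\Gamma)=\inf\{s: \text{some } s\text{-gale succeeds strongly on every } X\in\Gamma\}$. A learning function is a function $l:\{0,1\}^*\to\{0,1\}$ (yes $=1$, no $=0$). $Y\upharpoonright i$ is the length-$i$ prefix of $Y$; $\lambda$ is the uniform (Lebesgue) measure on $\{0,1\}^\infty$. For nonempty $w$, $\mathrm{AVG}_l(w)=\frac{1}{|w|}\sum_{i=0}^{|w|} l(w\upharpoonright i)$. For $s\ge0$, $l$ strongly $s$-learns $X$ iff (i) for all $n\in\mathbb N$, $\lambda(\{Y : \#\{i\in\mathbb N: l(Y\upharpoonright i)=1\}\ge n\})\le 2^{-n}$, and (ii) $\liminf_{n\to\infty}\mathrm{AVG}_l(X\upharpoonright n)\ge 1-s$ (no computability restriction on $l$). *)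

theory Defs
  imports "HOL-Probability.Probability"
begin

definition prefix :: "(nat \<Rightarrow> bool) \<Rightarrow> nat \<Rightarrow> bool list" where
  "prefix X n = map X [0..<n]"

definition is_gale :: "real \<Rightarrow> (bool list \<Rightarrow> real) \<Rightarrow> bool" where
  "is_gale s d \<longleftrightarrow> (\<forall>w. d w \<ge> 0) \<and>
     (\<forall>w. d w * 2 powr (- s * real (length w))
          = d (w @ [False]) * 2 powr (- s * real (length w + 1))
          + d (w @ [True]) * 2 powr (- s * real (length w + 1)))"

definition succeeds_strongly :: "(bool list \<Rightarrow> real) \<Rightarrow> (nat \<Rightarrow> bool) \<Rightarrow> bool" where
  "succeeds_strongly d X \<longleftrightarrow>
     Liminf sequentially (\<lambda>n. ereal (d (prefix X n))) = \<infinity>"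

definition packing_dim :: "(nat \<Rightarrow> bool) set \<Rightarrow> real" where
  "packing_dim \<Gamma> = Inf {s. s \<ge> 0 \<and> (\<exists>d. is_gale s d \<and> (\<forall>X\<in>\<Gamma>. succeeds_strongly d X))}"

definition cantor_measure :: "(nat \<Rightarrow> bool) measure" where
  "cantor_measure = (\<Pi>\<^sub>M i\<in>(UNIV::nat set). measure_pmf (bernoulli_pmf (1/2)))"

text \<open>Learning function: True = yes, False = no.\<close>
definition yes_set :: "(bool list \<Rightarrow> bool) \<Rightarrow> (nat \<Rightarrow> bool) \<Rightarrow> nat set" where
  "yes_set l Y = {i. l (prefix Y i)}"

definition AVG :: "(bool list \<Rightarrow> bool) \<Rightarrow> bool list \<Rightarrow> real" where
  "AVG l w = (\<Sum>i=0..length w. (if l (take i w) then 1 else 0)) / real (length w)"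

definition strongly_learns :: "(bool list \<Rightarrow> bool) \<Rightarrow> real \<Rightarrow> (nat \<Rightarrow> bool) \<Rightarrow> bool" where
  "strongly_learns l s X \<longleftrightarrow>
     (\<forall>n::nat. measure cantor_measure
         {Y \<in> space cantor_measure. infinite (yes_set l Y) \<or> card (yes_set l Y) \<ge> n}
       \<le> 2 powr (- real n)) \<and>
     Liminf sequentially (\<lambda>n. ereal (AVG l (prefix X n))) \<ge> ereal (1 - s)"

definition G_str :: "(nat \<Rightarrow> bool) set \<Rightarrow> real set" where
  "G_str \<Gamma> = {s. s \<ge> 0 \<and> (\<exists>l. \<forall>X\<in>\<Gamma>. strongly_learns l s X)}"

end

theory Submission
  imports Defs
begin

text \<open>Both inequalities go through martingales on finite strings, i.e. 1-gales; an s-gale d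
  corresponds to the martingale \<open>d w * 2 powr ((1 - s) * length w)\<close>.

  If an s-gale succeeds strongly on X, the associated martingale M exceeds \<open>2^((1-s)n)\<close> on
  almost all prefixes of X. The learner that says yes exactly when M reaches a new power of two
  then says yes about \<open>(1-s)n\<close> times along X, while by Ville's inequality a random sequence
  receives n yeses with probability at most \<open>2^-n\<close>.

  Conversely, let \<open>V n w\<close> (\<open>reach_prob\<close> below) be the probability that a random
  extension of w collects n yeses. Each \<open>V n\<close> is a martingale with \<open>V n [] \<le> 2^-n\<close>, so for
  \<open>q < 2\<close> the sum \<open>D = \<Sum>n. q^n V n\<close> (\<open>savings\<close>) is a martingale, and \<open>D w \<ge> q^c\<close> when
  w already carries c yeses. With \<open>q = 2^(1-e/4)\<close>, if the learner's average is eventually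
  above \<open>1-s-e/4\<close> on X, the (s+e)-gale \<open>D w * 2 powr ((s + e - 1) * length w)\<close> grows like
  \<open>2^(e n/2)\<close> along X.\<close>

section \<open>The uniform measure on Cantor space\<close>

abbreviation coin :: "bool measure" where
  "coin \<equiv> measure_pmf (bernoulli_pmf (1/2))"

interpretation coin_seq: sequence_space coin
  by (simp add: sequence_space_def product_prob_space_def product_prob_space_axioms_def
      product_sigma_finite_def prob_space_measure_pmf prob_space_imp_sigma_finite)

interpretation cantor: prob_space cantor_measure
  unfolding cantor_measure_def by (rule coin_seq.P.prob_space_axioms)

lemma space_cantor_measure [simp]: "space cantor_measure = UNIV"
  by (simp add: cantor_measure_def space_PiM)

lemma emeasure_cantor_split:
  assumes S: "S \<in> sets cantor_measure"
  shows "emeasure cantor_measure S =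
    (emeasure cantor_measure (case_nat True -` S) + emeasure cantor_measure (case_nat False -` S)) / 2"
proof -
  let ?S = "\<Pi>\<^sub>M i\<in>UNIV. coin"
  let ?cons = "\<lambda>(b, \<omega>). case_nat b \<omega>"
  have S': "S \<in> sets ?S" using S by (simp add: cantor_measure_def)
  have "emeasure ?S S = emeasure (distr (coin \<Otimes>\<^sub>M ?S) ?S ?cons) S"
    by (simp add: coin_seq.PiM_iter)
  also have "\<dots> = emeasure (coin \<Otimes>\<^sub>M ?S) (?cons -` S \<inter> space (coin \<Otimes>\<^sub>M ?S))"
    by (rule emeasure_distr[OF _ S']) measurable
  also have "\<dots> = (\<integral>\<^sup>+b. emeasure ?S (Pair b -` (?cons -` S \<inter> space (coin \<Otimes>\<^sub>M ?S))) \<partial>coin)"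
    by (rule coin_seq.P.emeasure_pair_measure_alt) (rule measurable_sets[OF _ S']; measurable)
  also have "\<dots> = (\<integral>\<^sup>+b. emeasure ?S (case_nat b -` S) \<partial>coin)"
    by (intro nn_integral_cong arg_cong2[where f=emeasure]) (auto simp: space_pair_measure space_PiM)
  also have "\<dots> = (emeasure ?S (case_nat True -` S) + emeasure ?S (case_nat False -` S)) / 2"
    by (subst nn_integral_measure_pmf_support[of UNIV])
      (auto simp: UNIV_bool divide_ennreal_def add.commute distrib_right)
  finally show ?thesis by (simp add: cantor_measure_def)
qed

lemma measure_cantor_split:
  assumes S: "S \<in> sets cantor_measure"
  shows "measure cantor_measure S =
    (measure cantor_measure (case_nat True -` S) + measure cantor_measure (case_nat False -` S)) / 2"
proof -
  let ?a = "measure cantor_measure (case_nat True -` S) + measure cantor_measure (case_nat False -` S)"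
  have "ennreal (measure cantor_measure S) = ennreal ?a / 2"
    using emeasure_cantor_split[OF S]
    by (simp add: cantor.emeasure_eq_measure ennreal_plus[symmetric] del: ennreal_plus)
  also have "\<dots> = ennreal (?a / 2)"
    using ennreal_divide_numeral[of ?a "num.Bit0 num.One"] by simp
  finally show ?thesis by simp
qed

lemma length_prefix [simp]: "length (prefix Y i) = i"
  by (simp add: prefix_def)

lemma prefix_0 [simp]: "prefix Y 0 = []"
  by (simp add: prefix_def)

lemma prefix_Suc: "prefix Y (Suc i) = prefix Y i @ [Y i]"
  by (simp add: prefix_def)

lemma prefix_case_nat_Suc: "prefix (case_nat b Y) (Suc i) = b # prefix Y i"
  by (induct i) (auto simp: prefix_Suc)

lemma take_prefix: "take j (prefix Y i) = prefix Y (min j i)"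
  by (simp add: prefix_def take_map min_def)

lemma prefix_eq_iff: "prefix Y i = v \<longleftrightarrow> length v = i \<and> (\<forall>j<i. Y j = v ! j)"
  by (auto simp: prefix_def list_eq_iff_nth_eq)

lemma measurable_prefix: "(\<lambda>Y. prefix Y i) \<in> cantor_measure \<rightarrow>\<^sub>M count_space UNIV"
proof (rule iffD2[OF measurable_count_space_eq2_countable], intro conjI ballI)
  fix v :: "bool list"
  have "{Y \<in> space cantor_measure. length v = i \<and> (\<forall>j<i. Y j = v ! j)} \<in> sets cantor_measure"
    unfolding cantor_measure_def by measurable
  then show "(\<lambda>Y. prefix Y i) -` {v} \<inter> space cantor_measure \<in> sets cantor_measure"
    by (simp add: prefix_eq_iff vimage_def Int_def)
qed simp

lemma measurable_pred_prefix [measurable]: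
  "(\<lambda>Y. P (prefix Y i)) \<in> cantor_measure \<rightarrow>\<^sub>M count_space (UNIV :: bool set)"
  using measurable_compose[OF measurable_prefix, of P "count_space UNIV"] by simp

lemma sets_ex_prefix: "{Y. \<exists>i. P i (prefix Y i)} \<in> sets cantor_measure"
proof -
  have "{Y \<in> space cantor_measure. \<exists>i. P i (prefix Y i)} \<in> sets cantor_measure"
    by measurable
  then show ?thesis by simp
qed

definition yes_count :: "(bool list \<Rightarrow> bool) \<Rightarrow> bool list \<Rightarrow> nat" where
  "yes_count l w = card {j. j \<le> length w \<and> l (take j w)}"

lemma AVG_eq_yes_count: "AVG l w = real (yes_count l w) / real (length w)"
proof -
  have "{0..length w} \<inter> {i. l (take i w)} = {j. j \<le> length w \<and> l (take j w)}"
    by auto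
  then show ?thesis
    by (simp add: AVG_def yes_count_def sum.If_cases)
qed

lemma yes_count_append_mono: "yes_count l w \<le> yes_count l (w @ v)"
  unfolding yes_count_def by (rule card_mono) auto

lemma yes_count_prefix: "yes_count l (prefix Y i) = card (yes_set l Y \<inter> {..i})"
proof -
  have "{j. j \<le> length (prefix Y i) \<and> l (take j (prefix Y i))} = yes_set l Y \<inter> {..i}"
    by (auto simp: take_prefix yes_set_def min_def)
  then show ?thesis by (simp add: yes_count_def)
qed

definition yes_at_least :: "(bool list \<Rightarrow> bool) \<Rightarrow> nat \<Rightarrow> (nat \<Rightarrow> bool) set" where
  "yes_at_least l n = {Y \<in> space cantor_measure. infinite (yes_set l Y) \<or> n \<le> card (yes_set l Y)}"

lemma strongly_learns_iff:
  "strongly_learns l s X \<longleftrightarrow>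
    (\<forall>n. measure cantor_measure (yes_at_least l n) \<le> 2 powr (- real n)) \<and>
    ereal (1 - s) \<le> Liminf sequentially (\<lambda>n. ereal (AVG l (prefix X n)))"
  by (simp add: strongly_learns_def yes_at_least_def)

lemma yes_at_least_eq: "yes_at_least l n = {Y. \<exists>i. n \<le> yes_count l (prefix Y i)}"
proof (intro set_eqI iffI)
  fix Y assume "Y \<in> yes_at_least l n"
  then have many: "infinite (yes_set l Y) \<or> n \<le> card (yes_set l Y)"
    by (simp add: yes_at_least_def)
  obtain F where F: "F \<subseteq> yes_set l Y" "finite F" "n \<le> card F"
  proof (cases "finite (yes_set l Y)")
    case True
    then show ?thesis using many that by blast
  next
    case False
    then show ?thesis using that infinite_arbitrarily_large[of _ n] by (metis order_refl)
  qed
  then obtain i where "\<forall>x\<in>F. x \<le> i"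
    using finite_nat_set_iff_bounded_le by blast
  with F have "F \<subseteq> yes_set l Y \<inter> {..i}"
    by auto
  then have "n \<le> yes_count l (prefix Y i)"
    using F unfolding yes_count_prefix by (meson card_mono finite_Int finite_atMost le_trans)
  then show "Y \<in> {Y. \<exists>i. n \<le> yes_count l (prefix Y i)}"
    by blast
next
  fix Y assume "Y \<in> {Y. \<exists>i. n \<le> yes_count l (prefix Y i)}"
  then obtain i where "n \<le> card (yes_set l Y \<inter> {..i})"
    by (auto simp: yes_count_prefix)
  then show "Y \<in> yes_at_least l n"
    unfolding yes_at_least_def by (metis Int_lower1 card_mono le_trans space_cantor_measure UNIV_I mem_Collect_eq)
qed

section \<open>Martingales on finite strings\<close>

definition martingale :: "(bool list \<Rightarrow> real) \<Rightarrow> bool" where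
  "martingale M \<longleftrightarrow> (\<forall>w. 0 \<le> M w) \<and> (\<forall>w. M w = (M (w @ [True]) + M (w @ [False])) / 2)"

lemma martingale_nonneg: "martingale M \<Longrightarrow> 0 \<le> M w"
  by (simp add: martingale_def)

lemma martingale_avg: "martingale M \<Longrightarrow> M w = (M (w @ [True]) + M (w @ [False])) / 2"
  by (simp add: martingale_def)

lemma martingale_mult: "martingale M \<Longrightarrow> 0 \<le> c \<Longrightarrow> martingale (\<lambda>w. c * M w)"
  unfolding martingale_def by (metis mult_nonneg_nonneg distrib_left times_divide_eq_right)

lemma martingale_suminf:
  assumes "\<And>n. martingale (M n)" and summable: "\<And>w. summable (\<lambda>n. M n w)"
  shows "martingale (\<lambda>w. \<Sum>n. M n w)"
  unfolding martingale_def
proof (intro conjI allI)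
  fix w
  show "0 \<le> (\<Sum>n. M n w)"
    by (rule suminf_nonneg[OF summable]) (simp add: assms martingale_nonneg)
  have "((\<Sum>n. M n (w @ [True])) + (\<Sum>n. M n (w @ [False]))) / 2
      = (\<Sum>n. (M n (w @ [True]) + M n (w @ [False])) / 2)"
    by (simp add: suminf_add[OF summable summable] suminf_divide summable_add summable)
  also have "\<dots> = (\<Sum>n. M n w)"
    by (simp add: assms martingale_avg[symmetric])
  finally show "(\<Sum>n. M n w) = ((\<Sum>n. M n (w @ [True])) + (\<Sum>n. M n (w @ [False]))) / 2" ..
qed

lemma martingale_snoc_le:
  assumes "martingale M"
  shows "M (w @ [b]) \<le> 2 * M w"
  using martingale_avg[OF assms, of w] martingale_nonneg[OF assms, of "w @ [True]"]
    martingale_nonneg[OF assms, of "w @ [False]"]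
  by (cases b) auto

lemma martingale_le_power_length: "martingale M \<Longrightarrow> M w \<le> 2 ^ length w * M []"
proof (induction w rule: rev_induct)
  case (snoc b w)
  then show ?case
    using martingale_snoc_le[of M w b] by simp
qed simp

lemma is_gale_iff_martingale:
  "is_gale s d \<longleftrightarrow> martingale (\<lambda>w. d w * 2 powr ((1 - s) * real (length w)))"
proof -
  have scale: "2 powr ((1 - s) * n) = 2 powr (- s * n) * 2 powr n"
    "2 powr ((1 - s) * (n + 1)) = 2 * (2 powr (- s * (n + 1)) * 2 powr n)" for n :: real
  proof -
    show "2 powr ((1 - s) * n) = 2 powr (- s * n) * 2 powr n"
      by (simp add: powr_add[symmetric] algebra_simps)
    have exponent: "(1 - s) * (n + 1) = 1 + (- s * (n + 1) + n)"
      by (simp add: algebra_simps)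
    show "2 powr ((1 - s) * (n + 1)) = 2 * (2 powr (- s * (n + 1)) * 2 powr n)"
      unfolding exponent powr_add by simp
  qed
  have cancel: "a * P = b * R + c * R \<longleftrightarrow> a * (P * Q) = (c * (2 * (R * Q)) + b * (2 * (R * Q))) / 2"
    if "0 < Q" for a b c P Q R :: real
  proof -
    have "(c * (2 * (R * Q)) + b * (2 * (R * Q))) / 2 = (b * R + c * R) * Q"
      by (simp add: algebra_simps)
    then show ?thesis
      using that by (simp add: mult.assoc[symmetric])
  qed
  have equation: "d w * 2 powr (- s * n) = d (w @ [False]) * 2 powr (- s * (n + 1)) + d (w @ [True]) * 2 powr (- s * (n + 1))
    \<longleftrightarrow> d w * 2 powr ((1 - s) * n)
      = (d (w @ [True]) * 2 powr ((1 - s) * (n + 1)) + d (w @ [False]) * 2 powr ((1 - s) * (n + 1))) / 2"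
    for w and n :: real
    unfolding scale(2) unfolding scale(1) by (rule cancel) simp
  have nonneg: "0 \<le> d w \<longleftrightarrow> 0 \<le> d w * 2 powr ((1 - s) * real (length w))" for w
    by (simp add: zero_le_mult_iff)
  have length: "real (length (w @ [b])) = real (length w) + 1" "real (length w + 1) = real (length w) + 1"
    for w :: "bool list" and b
    by simp_all
  show ?thesis
    unfolding is_gale_def martingale_def length by (simp only: equation nonneg)
qed

lemma martingale_imp_is_gale:
  assumes "martingale M"
  shows "is_gale s (\<lambda>w. M w * 2 powr ((s - 1) * real (length w)))"
proof -
  have "2 powr ((s - 1) * x) * 2 powr ((1 - s) * x) = 1" for x :: real
    by (simp add: powr_add[symmetric] algebra_simps)
  then have "(\<lambda>w. M w * 2 powr ((s - 1) * real (length w)) * 2 powr ((1 - s) * real (length w))) = M"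
    by (simp add: mult.assoc)
  then show ?thesis
    using assms by (simp add: is_gale_iff_martingale)
qed

lemma ville_bounded:
  assumes M: "martingale M" and c: "0 < c"
  shows "measure cantor_measure {Y. \<exists>i<k. c \<le> M (w @ prefix Y i)} \<le> M w / c"
proof (induction k arbitrary: w)
  case 0
  show ?case
    using c martingale_nonneg[OF M, of w] by simp
next
  case (Suc k)
  show ?case
  proof (cases "c \<le> M w")
    case True
    then show ?thesis
      using c cantor.prob_le_1 le_divide_eq_1_pos order_trans by blast
  next
    case False
    let ?S = "{Y. \<exists>i<Suc k. c \<le> M (w @ prefix Y i)}"
    have "case_nat b -` ?S = {Y. \<exists>i<k. c \<le> M ((w @ [b]) @ prefix Y i)}" for b
      using False by (simp add: Ex_less_Suc2 prefix_case_nat_Suc)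
    then have "measure cantor_measure ?S
        = (measure cantor_measure {Y. \<exists>i<k. c \<le> M ((w @ [True]) @ prefix Y i)}
          + measure cantor_measure {Y. \<exists>i<k. c \<le> M ((w @ [False]) @ prefix Y i)}) / 2"
      using measure_cantor_split[OF sets_ex_prefix[of "\<lambda>i v. i < Suc k \<and> c \<le> M (w @ v)"]]
      by simp
    also have "\<dots> \<le> (M (w @ [True]) / c + M (w @ [False]) / c) / 2"
      by (intro divide_right_mono add_mono Suc.IH) simp
    also have "\<dots> = M w / c"
      by (simp add: martingale_avg[OF M, of w] add_divide_distrib)
    finally show ?thesis .
  qed
qed

lemma ville:
  assumes M: "martingale M" and c: "0 < c"
  shows "measure cantor_measure {Y. \<exists>i. c \<le> M (prefix Y i)} \<le> M [] / c"
proof -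
  let ?A = "\<lambda>k. {Y. \<exists>i<k. c \<le> M ([] @ prefix Y i)}"
  have "range ?A \<subseteq> sets cantor_measure"
    using sets_ex_prefix[of "\<lambda>i v. i < k \<and> c \<le> M ([] @ v)" for k] by auto
  moreover have "incseq ?A"
    by (auto simp: incseq_def) (meson order_less_le_trans)
  ultimately have "(\<lambda>k. measure cantor_measure (?A k)) \<longlonglongrightarrow> measure cantor_measure (\<Union>k. ?A k)"
    by (rule cantor.finite_Lim_measure_incseq)
  then have "measure cantor_measure (\<Union>k. ?A k) \<le> M [] / c"
    by (rule LIMSEQ_le_const2) (use ville_bounded[OF M c, of _ "[]"] in auto)
  moreover have "(\<Union>k. ?A k) = {Y. \<exists>i. c \<le> M (prefix Y i)}"
    by auto
  ultimately show ?thesis by simp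
qed

section \<open>Records of a real sequence\<close>

definition new_level :: "(nat \<Rightarrow> real) \<Rightarrow> nat \<Rightarrow> bool" where
  "new_level f j \<longleftrightarrow> (\<exists>k::nat \<ge> 1. 2 ^ k \<le> f j \<and> (\<forall>j' < j. f j' < 2 ^ k))"

lemma card_new_levels_le_imp_reach:
  assumes n: "1 \<le> n" and card: "n \<le> card {j. j \<le> i \<and> new_level f j}"
  shows "\<exists>j\<le>i. (2::real) ^ n \<le> f j"
proof (rule ccontr)
  assume "\<not> ?thesis"
  then have below: "\<And>j. j \<le> i \<Longrightarrow> f j < 2 ^ n"
    by force
  let ?J = "{j. j \<le> i \<and> new_level f j}"
  define g where "g j = (SOME k::nat. 1 \<le> k \<and> 2 ^ k \<le> f j \<and> (\<forall>j'<j. f j' < 2 ^ k))" for j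
  have g: "1 \<le> g j \<and> 2 ^ g j \<le> f j \<and> (\<forall>j'<j. f j' < 2 ^ g j)" if "j \<in> ?J" for j
    using that unfolding g_def new_level_def by (metis (mono_tags, lifting) mem_Collect_eq)
  have "inj_on g ?J"
  proof (rule inj_onI, rule ccontr)
    fix a b assume a: "a \<in> ?J" and b: "b \<in> ?J" and "g a = g b" "a \<noteq> b"
    then show False
      using g[OF a] g[OF b] by (metis linorder_neqE_nat not_le)
  qed
  moreover have "g ` ?J \<subseteq> {1..<n}"
  proof
    fix k assume "k \<in> g ` ?J"
    then obtain j where j: "j \<in> ?J" "k = g j" by blast
    have "j \<le> i"
      using j(1) by simp
    then have "(2::real) ^ g j < 2 ^ n"
      using g[OF j(1)] below[of j] by linarith
    then have "k < n"
      using j(2) by simp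
    then show "k \<in> {1..<n}"
      using g[OF j(1)] j(2) by simp
  qed
  ultimately have "card ?J \<le> card {1..<n}"
    by (intro card_inj_on_le) simp_all
  then show False using card n by simp
qed

lemma reach_imp_card_new_levels_ge:
  assumes f0: "f 0 < 2" and dbl: "\<And>j. f (Suc j) \<le> 2 * f j"
    and reach: "(2::real) ^ L \<le> f i"
  shows "L \<le> card {j. j \<le> i \<and> new_level f j}"
proof -
  define p where "p k = (LEAST j. (2::real) ^ k \<le> f j)" for k
  have p: "2 ^ k \<le> f (p k) \<and> p k \<le> i \<and> (\<forall>j'<p k. f j' < 2 ^ k)" if "k \<in> {1..L}" for k
  proof -
    have "(2::real) ^ k \<le> f i"
      using that reach by (meson atLeastAtMost_iff order_trans power_increasing one_le_numeral)
    then show ?thesis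
      unfolding p_def by (metis LeastI Least_le not_less_Least not_le)
  qed
  have "p a \<noteq> p b" if a: "a \<in> {1..L}" and b: "b \<in> {1..L}" and "a < b" for a b
  proof
    assume e: "p a = p b"
    have "p b \<noteq> 0"
      using p[OF b] f0 b power_increasing[of 1 b "2::real"] by (metis atLeastAtMost_iff
          dual_order.trans not_le power_one_right one_le_numeral)
    then obtain q where q: "p b = Suc q"
      using not0_implies_Suc by blast
    have "f q < 2 ^ a"
      using p[OF a] e q by simp
    then have "f (Suc q) < 2 ^ Suc a"
      using dbl[of q] by simp
    moreover have "(2::real) ^ Suc a \<le> 2 ^ b"
      using \<open>a < b\<close> by (intro power_increasing) simp_all
    ultimately show False
      using p[OF b] q by simp
  qed
  then have "inj_on p {1..L}"
    by (metis inj_onI linorder_neqE_nat)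
  moreover have "p ` {1..L} \<subseteq> {j. j \<le> i \<and> new_level f j}"
    using p unfolding new_level_def by auto
  ultimately have "card {1..L} \<le> card {j. j \<le> i \<and> new_level f j}"
    by (intro card_inj_on_le) simp_all
  then show ?thesis by simp
qed

section \<open>From a martingale to a learning function\<close>

definition record_learner :: "(bool list \<Rightarrow> real) \<Rightarrow> bool list \<Rightarrow> bool" where
  "record_learner M w \<longleftrightarrow> new_level (\<lambda>j. M (take j w)) (length w)"

lemma yes_count_record_learner:
  "yes_count (record_learner M) (prefix Y i) = card {j. j \<le> i \<and> new_level (\<lambda>j. M (prefix Y j)) j}"
proof -
  have "record_learner M (prefix Y j) = new_level (\<lambda>j. M (prefix Y j)) j" for j
    by (simp add: record_learner_def new_level_def take_prefix min_def cong: conj_cong)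
  then have "{j. j \<le> length (prefix Y i) \<and> record_learner M (take j (prefix Y i))}
      = {j. j \<le> i \<and> new_level (\<lambda>j. M (prefix Y j)) j}"
    by (auto simp: take_prefix min_def)
  then show ?thesis by (simp add: yes_count_def)
qed

lemma record_learner_yes_bound:
  assumes M: "martingale M" and M0: "M [] \<le> 1"
  shows "measure cantor_measure (yes_at_least (record_learner M) n) \<le> 2 powr (- real n)"
proof (cases "n = 0")
  case True
  then show ?thesis using cantor.prob_le_1 by simp
next
  case False
  have "yes_at_least (record_learner M) n \<subseteq> {Y. \<exists>i. (2::real) ^ n \<le> M (prefix Y i)}"
  proof (intro subsetI CollectI)
    fix Y assume "Y \<in> yes_at_least (record_learner M) n"
    then obtain i where "n \<le> card {j. j \<le> i \<and> new_level (\<lambda>j. M (prefix Y j)) j}"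
      by (auto simp: yes_at_least_eq yes_count_record_learner)
    moreover have "1 \<le> n"
      using False by simp
    ultimately show "\<exists>i. (2::real) ^ n \<le> M (prefix Y i)"
      using card_new_levels_le_imp_reach by blast
  qed
  then have "measure cantor_measure (yes_at_least (record_learner M) n)
    \<le> measure cantor_measure {Y. \<exists>i. (2::real) ^ n \<le> M (prefix Y i)}"
    by (intro cantor.finite_measure_mono sets_ex_prefix)
  also have "\<dots> \<le> M [] / 2 ^ n"
    by (intro ville M) simp
  also have "\<dots> \<le> 2 powr (- real n)"
    using M0 by (simp add: powr_minus powr_realpow divide_right_mono divide_inverse)
  finally show ?thesis .
qed

lemma liminf_ge_of_eventually:
  assumes "eventually (\<lambda>m. a - 1 / real m \<le> f m) sequentially"
  shows "ereal a \<le> Liminf sequentially (\<lambda>m. ereal (f m))"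
proof -
  have "(\<lambda>m. ereal (a - 1 / real m)) \<longlonglongrightarrow> ereal a"
    by (intro tendsto_ereal tendsto_eq_intros lim_1_over_n) auto
  then have "Liminf sequentially (\<lambda>m. ereal (a - 1 / real m)) = ereal a"
    by (intro lim_imp_Liminf) simp_all
  moreover have "Liminf sequentially (\<lambda>m. ereal (a - 1 / real m)) \<le> Liminf sequentially (\<lambda>m. ereal (f m))"
    by (rule Liminf_mono) (use assms in \<open>auto elim: eventually_mono\<close>)
  ultimately show ?thesis by simp
qed

lemma record_learner_average:
  assumes M: "martingale M" and M0: "M [] \<le> 1"
    and growth: "eventually (\<lambda>m. 2 powr ((1 - s) * real m) \<le> M (prefix X m)) sequentially"
  shows "ereal (1 - s) \<le> Liminf sequentially (\<lambda>m. ereal (AVG (record_learner M) (prefix X m)))"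
proof (rule liminf_ge_of_eventually, rule eventually_mono[OF eventually_conj[OF growth eventually_gt_at_top[of 0]]])
  fix m :: nat assume "2 powr ((1 - s) * real m) \<le> M (prefix X m) \<and> 0 < m"
  then have Mm: "2 powr ((1 - s) * real m) \<le> M (prefix X m)" and m: "0 < m" by auto
  let ?c = "yes_count (record_learner M) (prefix X m)"
  have "(1 - s) * real m - 1 \<le> real ?c"
  proof (cases "1 \<le> (1 - s) * real m")
    case True
    define L where "L = nat \<lfloor>(1 - s) * real m\<rfloor>"
    have L: "real L \<le> (1 - s) * real m" "(1 - s) * real m - 1 \<le> real L"
      using True by (simp_all add: L_def)
    have "(2::real) ^ L = 2 powr real L"
      by (simp add: powr_realpow)
    also have "\<dots> \<le> 2 powr ((1 - s) * real m)"
      using L(1) by simp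
    also have "\<dots> \<le> M (prefix X m)"
      by (rule Mm)
    finally have "(2::real) ^ L \<le> M (prefix X m)" .
    then have "L \<le> ?c"
      unfolding yes_count_record_learner
      by (intro reach_imp_card_new_levels_ge) (use M0 in \<open>simp_all add: prefix_Suc martingale_snoc_le[OF M]\<close>)
    then show ?thesis using L(2) by linarith
  qed simp
  then have "((1 - s) * real m - 1) / real m \<le> AVG (record_learner M) (prefix X m)"
    using m by (simp add: AVG_eq_yes_count divide_right_mono)
  then show "1 - s - 1 / real m \<le> AVG (record_learner M) (prefix X m)"
    using m by (simp add: diff_divide_distrib)
qed

lemma succeeds_strongly_iff_at_top:
  "succeeds_strongly d X \<longleftrightarrow> filterlim (\<lambda>n. d (prefix X n)) at_top sequentially"
  unfolding succeeds_strongly_def by (simp add: Liminf_PInfty[symmetric] tendsto_PInfty_eq_at_top)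

lemma strong_success_imp_G_str:
  assumes s: "0 \<le> s" and gale: "is_gale s d" and success: "\<forall>X\<in>\<Gamma>. succeeds_strongly d X"
  shows "s \<in> G_str \<Gamma>"
proof -
  define K where "K = d [] + 1"
  have K: "0 < K"
    using gale by (simp add: K_def is_gale_def add_nonneg_pos)
  define M where "M w = inverse K * (d w * 2 powr ((1 - s) * real (length w)))" for w
  have M: "martingale M"
    unfolding M_def using gale K by (intro martingale_mult) (simp_all add: is_gale_iff_martingale)
  have M0: "M [] \<le> 1"
    using K by (simp add: M_def K_def field_simps)
  have "eventually (\<lambda>m. 2 powr ((1 - s) * real m) \<le> M (prefix X m)) sequentially" if "X \<in> \<Gamma>" for X
  proof -
    have "eventually (\<lambda>m. K < d (prefix X m)) sequentially"
      using success that by (simp add: succeeds_strongly_iff_at_top filterlim_at_top_dense)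
    then show ?thesis
      by (rule eventually_mono) (use K in \<open>simp add: M_def field_simps\<close>)
  qed
  then show ?thesis
    using s record_learner_yes_bound[OF M M0] record_learner_average[OF M M0]
    unfolding G_str_def strongly_learns_iff by blast
qed

section \<open>From a learning function to a martingale\<close>

definition reach_prob :: "(bool list \<Rightarrow> bool) \<Rightarrow> nat \<Rightarrow> bool list \<Rightarrow> real" where
  "reach_prob l n w = measure cantor_measure {Y. \<exists>j. n \<le> yes_count l (w @ prefix Y j)}"

lemma martingale_reach_prob: "martingale (reach_prob l n)"
  unfolding martingale_def
proof (intro conjI allI)
  fix w
  show "0 \<le> reach_prob l n w"
    by (simp add: reach_prob_def)
  let ?S = "{Y. \<exists>j. n \<le> yes_count l (w @ prefix Y j)}"
  have "case_nat b -` ?S = {Y. \<exists>j. n \<le> yes_count l ((w @ [b]) @ prefix Y j)}" for b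
  proof (intro set_eqI iffI)
    fix Y assume "Y \<in> case_nat b -` ?S"
    then obtain j where j: "n \<le> yes_count l (w @ prefix (case_nat b Y) j)" by auto
    show "Y \<in> {Y. \<exists>j. n \<le> yes_count l ((w @ [b]) @ prefix Y j)}"
    proof (cases j)
      case 0
      then have "n \<le> yes_count l ((w @ [b]) @ prefix Y 0)"
        using j yes_count_append_mono[of l w "[b]"] by simp
      then show ?thesis by blast
    next
      case (Suc i)
      then have "n \<le> yes_count l ((w @ [b]) @ prefix Y i)"
        using j by (simp add: prefix_case_nat_Suc)
      then show ?thesis by blast
    qed
  next
    fix Y assume "Y \<in> {Y. \<exists>j. n \<le> yes_count l ((w @ [b]) @ prefix Y j)}"
    then obtain j where "n \<le> yes_count l (w @ prefix (case_nat b Y) (Suc j))"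
      by (auto simp: prefix_case_nat_Suc)
    then show "Y \<in> case_nat b -` ?S" by blast
  qed
  then show "reach_prob l n w = (reach_prob l n (w @ [True]) + reach_prob l n (w @ [False])) / 2"
    unfolding reach_prob_def
    using measure_cantor_split[OF sets_ex_prefix[of "\<lambda>j v. n \<le> yes_count l (w @ v)"]] by simp
qed

lemma reach_prob_Nil: "reach_prob l n [] = measure cantor_measure (yes_at_least l n)"
  by (simp add: reach_prob_def yes_at_least_eq)

lemma reach_prob_eq_1:
  assumes "n \<le> yes_count l w"
  shows "reach_prob l n w = 1"
proof -
  have "{Y. \<exists>j. n \<le> yes_count l (w @ prefix Y j)} = space cantor_measure"
    using assms by (auto intro: exI[of _ 0])
  then show ?thesis
    unfolding reach_prob_def using cantor.prob_space by simp
qed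

definition savings :: "(bool list \<Rightarrow> bool) \<Rightarrow> real \<Rightarrow> bool list \<Rightarrow> real" where
  "savings l q w = (\<Sum>n. q ^ n * reach_prob l n w)"

context
  fixes l :: "bool list \<Rightarrow> bool" and q :: real
  assumes rare: "\<And>n. reach_prob l n [] \<le> (1/2) ^ n" and q: "0 < q" "q < 2"
begin

lemma summable_savings: "summable (\<lambda>n. q ^ n * reach_prob l n w)"
proof (rule summable_comparison_test'[where N=0])
  show "summable (\<lambda>n. 2 ^ length w * (q/2) ^ n)"
    using q by (intro summable_mult summable_geometric) simp
  fix n
  have "reach_prob l n w \<le> 2 ^ length w * (1/2) ^ n"
    using martingale_le_power_length[OF martingale_reach_prob] rare
    by (meson mult_left_mono order_trans zero_le_numeral zero_le_power)
  then have "q ^ n * reach_prob l n w \<le> q ^ n * (2 ^ length w * (1/2) ^ n)"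
    using q by (simp add: mult_left_mono)
  then show "norm (q ^ n * reach_prob l n w) \<le> 2 ^ length w * (q/2) ^ n"
    using q martingale_nonneg[OF martingale_reach_prob]
    by (simp add: field_simps)
qed

lemma martingale_savings: "martingale (savings l q)"
  unfolding savings_def using q summable_savings
  by (intro martingale_suminf martingale_mult martingale_reach_prob) simp_all

lemma power_yes_count_le_savings: "q ^ yes_count l w \<le> savings l q w"
proof -
  have "(\<Sum>n\<in>{yes_count l w}. q ^ n * reach_prob l n w) \<le> savings l q w"
    unfolding savings_def using q
    by (intro sum_le_suminf summable_savings)
      (simp_all add: less_imp_le martingale_nonneg[OF martingale_reach_prob])
  then show ?thesis by (simp add: reach_prob_eq_1)
qed

end

lemma exponent_gain:
  fixes e s c m :: real
  assumes e: "0 < e" "e \<le> 4" and s: "0 \<le> s" and c: "0 \<le> c" and m: "0 \<le> m"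
    and avg: "(1 - s - e/4) * m \<le> c"
  shows "e/2 * m \<le> (1 - e/4) * c + (s + e - 1) * m"
proof (cases "1 - s - e/4 \<le> 0")
  case True
  have "e/2 * m \<le> (s + e - 1) * m"
    using True e m by (intro mult_right_mono) linarith+
  moreover have "0 \<le> (1 - e/4) * c"
    using e c by (intro mult_nonneg_nonneg) linarith+
  ultimately show ?thesis by linarith
next
  case False
  have "(1 - e/4) * ((1 - s - e/4) * m) \<le> (1 - e/4) * c"
    using False s avg by (intro mult_left_mono) linarith+
  moreover have "(1 - s - e/4) * m \<le> m"
    using False e s m by (intro mult_left_le_one_le) linarith+
  then have "e/4 * ((1 - s - e/4) * m) \<le> e/4 * m"
    using e by (intro mult_left_mono) linarith+
  moreover have "(1 - e/4) * ((1 - s - e/4) * m) + e/4 * ((1 - s - e/4) * m) = (1 - s - e/4) * m"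
    by (simp add: field_simps)
  moreover have "(s + e - 1) * m = e/2 * m + e/4 * m - (1 - s - e/4) * m"
    by (simp add: field_simps)
  ultimately show ?thesis by linarith
qed

lemma succeeds_strongly_if_yes_count_bound:
  assumes e: "0 < e" "e \<le> 4" and s: "0 \<le> s"
    and avg: "ereal (1 - s) \<le> Liminf sequentially (\<lambda>m. ereal (AVG l (prefix X m)))"
    and bound: "\<And>w. (2 powr (1 - e/4)) ^ yes_count l w \<le> D w"
  shows "succeeds_strongly (\<lambda>w. D w * 2 powr ((s + e - 1) * real (length w))) X"
proof -
  have "\<forall>y<ereal (1 - s). eventually (\<lambda>m. y < ereal (AVG l (prefix X m))) sequentially"
    using avg unfolding le_Liminf_iff by blast
  from this[rule_format, of "ereal (1 - s - e/4)"]
  have "eventually (\<lambda>m. ereal (1 - s - e/4) < ereal (AVG l (prefix X m))) sequentially"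
    using e by simp
  then have "eventually (\<lambda>m. 2 powr (e/2 * real m) \<le> D (prefix X m) * 2 powr ((s + e - 1) * real m)) sequentially"
  proof (rule eventually_mono[OF eventually_conj[OF _ eventually_gt_at_top[of 0]]], elim conjE)
    fix m :: nat assume avg_m: "ereal (1 - s - e/4) < ereal (AVG l (prefix X m))" and m: "0 < m"
    let ?c = "yes_count l (prefix X m)"
    have "(1 - s - e/4) * real m \<le> real ?c"
      using avg_m m by (simp add: AVG_eq_yes_count less_divide_eq less_imp_le)
    then have "2 powr (e/2 * real m) \<le> 2 powr ((1 - e/4) * real ?c + (s + e - 1) * real m)"
      using exponent_gain[of e s "real ?c" "real m"] e s by simp
    also have "\<dots> = (2 powr (1 - e/4)) ^ ?c * 2 powr ((s + e - 1) * real m)"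
      by (simp add: powr_add powr_powr[symmetric] powr_realpow)
    also have "\<dots> \<le> D (prefix X m) * 2 powr ((s + e - 1) * real m)"
      using bound by (simp add: mult_right_mono)
    finally show "2 powr (e/2 * real m) \<le> D (prefix X m) * 2 powr ((s + e - 1) * real m)" .
  qed
  moreover have "filterlim (\<lambda>m::nat. exp (e/2 * ln 2 * real m)) at_top sequentially"
    using e by (intro filterlim_compose[OF exp_at_top] filterlim_tendsto_pos_mult_at_top[OF tendsto_const]
        filterlim_real_sequentially) simp
  then have "filterlim (\<lambda>m::nat. 2 powr (e/2 * real m)) at_top sequentially"
    by (simp add: powr_def mult_ac)
  ultimately show ?thesis
    unfolding succeeds_strongly_iff_at_top by (auto intro: filterlim_at_top_mono)
qed

lemma G_str_imp_strong_success:
  assumes learns: "s \<in> G_str \<Gamma>" and e: "0 < e" "e \<le> 4"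
  shows "\<exists>d. is_gale (s + e) d \<and> (\<forall>X\<in>\<Gamma>. succeeds_strongly d X)"
proof (cases "\<Gamma> = {}")
  case True
  have "is_gale (s + e) (\<lambda>_. 0)"
    by (simp add: is_gale_def)
  then show ?thesis using True by blast
next
  case False
  then obtain X0 where "X0 \<in> \<Gamma>" by blast
  from learns obtain l where s: "0 \<le> s" and L: "\<forall>X\<in>\<Gamma>. strongly_learns l s X"
    by (auto simp: G_str_def)
  define q where "q = (2::real) powr (1 - e/4)"
  have q: "0 < q" "q < 2"
    using e powr_less_mono[of "1 - e/4" 1 "2::real"] by (simp_all add: q_def)
  have rare: "reach_prob l n [] \<le> (1/2) ^ n" for n
    using L \<open>X0 \<in> \<Gamma>\<close> unfolding strongly_learns_iff reach_prob_Nil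
    by (simp add: powr_minus powr_realpow power_one_over inverse_eq_divide)
  show ?thesis
  proof (intro exI conjI ballI)
    show "is_gale (s + e) (\<lambda>w. savings l q w * 2 powr ((s + e - 1) * real (length w)))"
      by (intro martingale_imp_is_gale martingale_savings rare q)
    show "succeeds_strongly (\<lambda>w. savings l q w * 2 powr ((s + e - 1) * real (length w))) X"
      if "X \<in> \<Gamma>" for X
      using e s L that power_yes_count_le_savings[OF rare q]
      unfolding strongly_learns_iff q_def by (intro succeeds_strongly_if_yes_count_bound) auto
  qed
qed

lemma silent_learner_in_G_str: "1 \<in> G_str \<Gamma>"
proof -
  have "strongly_learns (\<lambda>_. False) 1 X" for X
  proof -
    have "AVG (\<lambda>_. False) w = 0" for w
      by (simp add: AVG_def)
    then show ?thesis
      unfolding strongly_learns_iff yes_at_least_def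
      by (auto simp: yes_set_def Liminf_const zero_ereal_def)
  qed
  then show ?thesis by (auto simp: G_str_def)
qed

lemma cInf_eq_if_approximated:
  fixes A B :: "real set"
  assumes AB: "A \<subseteq> B" and B: "B \<noteq> {}" "bdd_below B"
    and approx: "\<And>s e. s \<in> B \<Longrightarrow> 0 < e \<Longrightarrow> e \<le> 1 \<Longrightarrow> s + e \<in> A"
  shows "Inf A = Inf B"
proof (rule antisym)
  have A: "bdd_below A" "A \<noteq> {}"
    using AB B approx[of _ 1] by (auto intro: bdd_below_mono)
  show "Inf A \<le> Inf B"
  proof (rule cInf_greatest[OF B(1)])
    fix s assume "s \<in> B"
    show "Inf A \<le> s"
    proof (rule field_le_epsilon)
      fix e :: real assume "0 < e"
      then have "Inf A \<le> s + min e 1"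
        using \<open>s \<in> B\<close> A by (intro cInf_lower approx) simp_all
      then show "Inf A \<le> s + e" by linarith
    qed
  qed
  show "Inf B \<le> Inf A"
    using AB B A by (intro cInf_superset_mono)
qed

theorem mainTheorem8:
  fixes \<Gamma> :: "(nat \<Rightarrow> bool) set"
  shows "packing_dim \<Gamma> = Inf (G_str \<Gamma>)"
  unfolding packing_dim_def
proof (rule cInf_eq_if_approximated)
  show "{s. 0 \<le> s \<and> (\<exists>d. is_gale s d \<and> (\<forall>X\<in>\<Gamma>. succeeds_strongly d X))} \<subseteq> G_str \<Gamma>"
    using strong_success_imp_G_str by blast
  show "G_str \<Gamma> \<noteq> {}"
    using silent_learner_in_G_str by blast
  show "bdd_below (G_str \<Gamma>)"
    by (rule bdd_belowI[of _ 0]) (simp add: G_str_def)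
  show "s + e \<in> {s. 0 \<le> s \<and> (\<exists>d. is_gale s d \<and> (\<forall>X\<in>\<Gamma>. succeeds_strongly d X))}"
    if "s \<in> G_str \<Gamma>" "0 < e" "e \<le> 1" for s e
    using that G_str_imp_strong_success[of s \<Gamma> e] by (simp add: G_str_def)
qed

end
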